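(* Let $p$ be an odd prime and $X,Y\in\mathcal{X}_p$. Then $X\subseteq Y$ if and only if $i(Y)$ divides $i(X)$.
   Context: $\mathbb{N}=\{1,2,\dots\}$, $\mathbb{N}_0=\{0\}\cup\mathbb{N}$, $x^{\mathbb{N}}=\{x^k:k\in\mathbb{N}\}$. $\mathbb{Z}_{p^n}=\mathbb{Z}/p^n\mathbb{Z}$ with unit group $\mathbb{Z}_{p^n}^\times$, and $\pi_n:\mathbb{N}\to\mathbb{Z}_{p^n}$, $x\mapsto x+p^n\mathbb{Z}$. The $p$-adic topology on $\mathbb{N}\setminus p\mathbb{N}$ is generated by the sets $x+p^m\mathbb{N}_0$. $\mathcal{X}_p=\{\overline{a^{\mathbb{N}}}:a\in\mathbb{N}\setminus p\mathbb{N},\ a\ne1\}$, closures in the $p$-adic topology on $\mathbb{N}\setminus p\mathbb{N}$. For $X\in\mathcal{X}_p$, $n(X)=\min\{n\in\mathbb{N}: X=\pi_n^{-1}(\pi_n(X)),\ |\pi_n(X)|\ge\max\{p,3\}\}$ (this is well defined, and $\pi_{n(X)}(X)$ is a cyclic subgroup of $\mathbb{Z}_{p^{n(X)}}^\times$), and $i(X)$ is the index of the subgroup $\pi_{n(X)}(X)$ in $\mathbb{Z}_{p^{n(X)}}^\times$. *)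

theory Defs
  imports "HOL-Analysis.Analysis"
begin

definition coprimeN :: "nat \<Rightarrow> nat set" where
  "coprimeN p = {x. x \<ge> 1 \<and> \<not> p dvd x}"

definition padic_top :: "nat \<Rightarrow> nat topology" where
  "padic_top p = topology_generated_by
     {{x + p ^ m * k | k. True} | x m. x \<in> coprimeN p \<and> m \<ge> 1}"

definition powN :: "nat \<Rightarrow> nat set" where
  "powN a = {a ^ k | k. k \<ge> 1}"

definition Xp :: "nat \<Rightarrow> nat set set" where
  "Xp p = {padic_top p closure_of powN a | a. a \<in> coprimeN p \<and> a \<noteq> 1}"

definition pi_res :: "nat \<Rightarrow> nat \<Rightarrow> nat \<Rightarrow> nat" where
  "pi_res p n x = x mod p ^ n"

definition nX :: "nat \<Rightarrow> nat set \<Rightarrow> nat" where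
  "nX p X = (LEAST n. n \<ge> 1 \<and>
      X = {x. x \<ge> 1 \<and> pi_res p n x \<in> pi_res p n ` X} \<and>
      card (pi_res p n ` X) \<ge> max p 3)"

definition units_res :: "nat \<Rightarrow> nat set" where
  "units_res m = {u. u < m \<and> coprime u m}"

text \<open>i(X): index of pi_{n(X)}(X) in the unit group Z_{p^{n(X)}}^x (finite groups:
  index = quotient of the orders).\<close>
definition iX :: "nat \<Rightarrow> nat set \<Rightarrow> nat" where
  "iX p X = card (units_res (p ^ nX p X)) div card (pi_res p (nX p X) ` X)"

end

theory Submission
  imports Defs "HOL-Number_Theory.Number_Theory"
begin

text \<open>The closure of \<open>{a ^ k | k \<ge> 1}\<close> consists of the \<open>y \<ge> 1\<close> that are
  congruent to a power of \<open>a\<close> modulo every \<open>p ^ m\<close>. Writing \<open>a ^ (p - 1) = 1 + u p ^ v\<close>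
  with \<open>p\<close> not dividing \<open>u\<close>, lifting the exponent shows that from level \<open>v\<close> on such a
  congruence modulo \<open>p ^ m\<close> lifts to one modulo \<open>p ^ (m + 1)\<close>. Hence the closure is the
  full preimage of the cyclic group generated by \<open>a\<close> modulo \<open>p ^ n\<close> for all large \<open>n\<close>,
  and its index is \<open>\<phi>(p ^ N) / ord (p ^ N) a\<close> for every \<open>N \<ge> n(X)\<close>. Now \<open>X \<subseteq> Y\<close>
  iff \<open>a\<close> is a power of \<open>b\<close> modulo every \<open>p ^ N\<close>; as the units modulo an odd prime
  power form a cyclic group, this happens iff \<open>ord a\<close> divides \<open>ord b\<close>, i.e. iff \<open>i(Y)\<close>
  divides \<open>i(X)\<close>.\<close>

section \<open>Binomial remainders and lifting the exponent\<close>

lemma cube_dvd_binomial_remainder: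
  fixes x :: "'a :: comm_ring_1"
  shows "x ^ 3 dvd (1 + x) ^ i - (1 + of_nat i * x + of_nat (i choose 2) * x ^ 2)"
proof (induction i)
  case 0
  then show ?case by (simp add: numeral_2_eq_2)
next
  case (Suc i)
  then obtain r where r: "(1 + x) ^ i = 1 + of_nat i * x + of_nat (i choose 2) * x ^ 2 + x ^ 3 * r"
    by (auto simp: dvd_def algebra_simps)
  have "Suc i choose 2 = i + (i choose 2)"
    by (simp add: numeral_2_eq_2)
  then have "(1 + x) ^ Suc i = 1 + of_nat (Suc i) * x + of_nat (Suc i choose 2) * x ^ 2
      + x ^ 3 * (of_nat (i choose 2) + r + r * x)"
    by (simp add: r algebra_simps power2_eq_square power3_eq_cube)
  then show ?case by simp
qed

lemma square_dvd_binomial_remainder: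
  fixes x :: "'a :: comm_ring_1"
  shows "x ^ 2 dvd (1 + x) ^ i - (1 + of_nat i * x)"
proof -
  have "x ^ 2 dvd (1 + x) ^ i - (1 + of_nat i * x + of_nat (i choose 2) * x ^ 2)"
    using cube_dvd_binomial_remainder by (rule dvd_trans[rotated]) (simp add: le_imp_power_dvd)
  moreover have "(1 + x) ^ i - (1 + of_nat i * x) =
      ((1 + x) ^ i - (1 + of_nat i * x + of_nat (i choose 2) * x ^ 2)) + of_nat (i choose 2) * x ^ 2"
    by (simp add: algebra_simps)
  ultimately show ?thesis by (metis dvd_add dvd_triv_right)
qed

lemma odd_dvd_choose_two:
  fixes p :: nat
  assumes "odd p"
  shows "p dvd p choose 2"
proof -
  obtain q where "p = 2 * q + 1" using assms oddE by blast
  then have "p choose 2 = p * q" by (simp add: choose_two)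
  then show ?thesis by simp
qed

lemma prime_power_dvd_binomial_remainder:
  fixes q x :: "'a :: comm_ring_1"
  assumes "1 \<le> m" and "q ^ m dvd x"
  shows "q ^ (m + 1) dvd (1 + x) ^ i - (1 + of_nat i * x)"
proof -
  have "q ^ (m + 1) dvd q ^ (m * 2)"
    by (rule le_imp_power_dvd) (use assms(1) in simp)
  also have "\<dots> = (q ^ m) ^ 2" by (simp add: power_mult)
  also have "\<dots> dvd x ^ 2" using assms(2) by (rule dvd_power_same)
  finally show ?thesis using square_dvd_binomial_remainder dvd_trans by blast
qed

lemma odd_power_binomial_remainder:
  fixes x :: int and p :: nat
  assumes "odd p" and "1 \<le> m" and "int p ^ m dvd x"
  shows "int p ^ (m + 2) dvd (1 + x) ^ p - (1 + int p * x)"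
proof -
  have pow: "int p ^ k dvd x ^ l" if "k \<le> m * l" for k l
  proof -
    have "int p ^ k dvd (int p ^ m) ^ l"
      unfolding power_mult[symmetric] using that by (rule le_imp_power_dvd)
    also have "\<dots> dvd x ^ l" using assms(3) by (rule dvd_power_same)
    finally show ?thesis .
  qed
  obtain c where c: "p choose 2 = p * c" using odd_dvd_choose_two[OF assms(1)] by blast
  have "int p ^ (m + 2) dvd int p * x ^ 2"
    using pow[of "m + 1" 2] assms(2) by (simp add: mult_dvd_mono)
  moreover have "int (p choose 2) * x ^ 2 = int p * x ^ 2 * int c" using c by simp
  ultimately have "int p ^ (m + 2) dvd int (p choose 2) * x ^ 2" by (metis dvd_mult2)
  moreover have "int p ^ (m + 2) dvd (1 + x) ^ p - (1 + int p * x + int (p choose 2) * x ^ 2)"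
    using pow[of "m + 2" 3] assms(2) cube_dvd_binomial_remainder[of x p] by (auto intro: dvd_trans)
  moreover have "(1 + x) ^ p - (1 + int p * x) =
      ((1 + x) ^ p - (1 + int p * x + int (p choose 2) * x ^ 2)) + int (p choose 2) * x ^ 2"
    by (simp add: algebra_simps)
  ultimately show ?thesis by (metis dvd_add)
qed

lemma lifting_the_exponent:
  fixes u :: int and p :: nat
  assumes "odd p" and "1 \<le> v"
  shows "int p ^ (v + j + 1) dvd (1 + u * int p ^ v) ^ (p ^ j) - (1 + u * int p ^ (v + j))"
proof (induction j)
  case 0
  then show ?case by simp
next
  case (Suc j)
  define x where "x = (1 + u * int p ^ v) ^ (p ^ j) - 1"
  have "x - u * int p ^ (v + j) = (1 + u * int p ^ v) ^ (p ^ j) - (1 + u * int p ^ (v + j))"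
    unfolding x_def by simp
  with Suc.IH have IH: "int p ^ (v + j + 1) dvd x - u * int p ^ (v + j)"
    by (simp only:)
  then have "int p ^ (v + j) dvd x - u * int p ^ (v + j)"
    by (rule dvd_trans[rotated]) (simp add: le_imp_power_dvd)
  then have x: "int p ^ (v + j) dvd x"
    by (metis diff_add_cancel dvd_add dvd_triv_right)
  have "int p ^ (v + Suc j + 1) dvd (1 + x) ^ p - (1 + int p * x)"
    using odd_power_binomial_remainder[OF assms(1) _ x] assms(2) by simp
  moreover have "int p ^ (v + Suc j + 1) dvd int p * (x - u * int p ^ (v + j))"
    using IH by (simp add: mult_dvd_mono)
  ultimately have "int p ^ (v + Suc j + 1) dvd
      ((1 + x) ^ p - (1 + int p * x)) + int p * (x - u * int p ^ (v + j))"
    by (rule dvd_add)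
  also have "(1 + x) ^ p = (1 + u * int p ^ v) ^ (p ^ Suc j)"
    unfolding x_def by (simp add: power_mult[symmetric] mult.commute)
  finally show ?case by (simp add: algebra_simps)
qed

lemma power_cong_one_plus_prime_power:
  fixes c u q :: int
  assumes "1 \<le> m" and c: "q ^ (m + 1) dvd c - (1 + u * q ^ m)"
  shows "q ^ (m + 1) dvd c ^ i - (1 + int i * u * q ^ m)"
proof -
  have "q ^ m dvd c - (1 + u * q ^ m)"
    using c by (rule dvd_trans[rotated]) (simp add: le_imp_power_dvd)
  moreover have "c - 1 = (c - (1 + u * q ^ m)) + u * q ^ m" by simp
  ultimately have "q ^ m dvd c - 1" by (metis dvd_add dvd_triv_right)
  then have "q ^ (m + 1) dvd (1 + (c - 1)) ^ i - (1 + int i * (c - 1))"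
    by (rule prime_power_dvd_binomial_remainder[OF assms(1)])
  moreover have "q ^ (m + 1) dvd int i * (c - (1 + u * q ^ m))"
    using c by simp
  moreover have "c ^ i - (1 + int i * u * q ^ m) =
      ((1 + (c - 1)) ^ i - (1 + int i * (c - 1))) + int i * (c - (1 + u * q ^ m))"
    by (simp add: algebra_simps)
  ultimately show ?thesis by (metis dvd_add)
qed

section \<open>Lifting congruences to powers of a unit\<close>

lemma prime_dvd_iff_not_coprime:
  fixes p :: "'a :: semiring_gcd"
  assumes "prime p"
  shows "p dvd a \<longleftrightarrow> \<not> coprime a p"
proof
  assume "p dvd a"
  then show "\<not> coprime a p"
    using assms coprime_common_divisor[of a p p] not_prime_unit by auto
next
  assume "\<not> coprime a p"
  then show "p dvd a"
    using prime_imp_coprime[OF assms, of a] coprime_commute by auto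
qed

lemma nat_cong_iff_int_dvd: "[y = b] (mod n) \<longleftrightarrow> int n dvd int y - int b"
  by (simp add: cong_int_iff[symmetric] cong_iff_dvd_diff)

lemma prime_linear_cong_solvable:
  fixes w t :: int
  assumes "prime p" and "\<not> int p dvd w"
  shows "\<exists>i::nat. int p dvd t - int i * w"
proof -
  have "prime (int p)" using assms(1) by simp
  then have "coprime (int p) w"
    using assms(2) by (rule prime_imp_coprime)
  then obtain w' where w': "[w * w' = 1] (mod int p)"
    using cong_solve_coprime_int coprime_commute by blast
  define i where "i = nat ((w' * t) mod int p)"
  have "int i = (w' * t) mod int p"
    unfolding i_def using prime_gt_0_nat[OF assms(1)] by simp
  then have "[int i * w = (w' * t) * w] (mod int p)"
    by (simp add: cong_def mod_mult_left_eq)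
  also have "(w' * t) * w = t * (w * w')" by (simp add: algebra_simps)
  also have "[t * (w * w') = t * 1] (mod int p)" using w' by (rule cong_scalar_left)
  finally show ?thesis
    by (auto simp: cong_iff_dvd_diff dvd_diff_commute)
qed

text \<open>With \<open>e = (p - 1) p ^ (m - v)\<close>, lifting the exponent gives
  \<open>a ^ e \<equiv> 1 + u p ^ m\<close> modulo \<open>p ^ (m + 1)\<close>, so multiplying \<open>a ^ k\<close> by \<open>a ^ (e i)\<close>
  adds \<open>i u a ^ k p ^ m\<close>; since \<open>u a ^ k\<close> is a unit modulo \<open>p\<close>, a suitable \<open>i\<close>
  absorbs the discrepancy \<open>(y - a ^ k) / p ^ m\<close>.\<close>
lemma power_cong_lift:
  fixes p a y k m v :: nat and u :: int
  assumes p: "prime p" "odd p" and "coprime a p" and v: "1 \<le> v" "v \<le> m"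
    and "\<not> int p dvd u" and a: "int a ^ (p - 1) = 1 + u * int p ^ v"
    and y: "[y = a ^ k] (mod p ^ m)"
  shows "\<exists>k'. [y = a ^ k'] (mod p ^ (m + 1))"
proof -
  define e where "e = (p - 1) * p ^ (m - v)"
  have "int a ^ e = (1 + u * int p ^ v) ^ (p ^ (m - v))"
    unfolding e_def power_mult a ..
  then have "int p ^ (m + 1) dvd int a ^ e - (1 + u * int p ^ m)"
    using lifting_the_exponent[OF p(2) v(1), where u = u and j = "m - v"] v(2) by simp
  then have ci: "int p ^ (m + 1) dvd int a ^ (e * i) - (1 + int i * u * int p ^ m)" for i
    using power_cong_one_plus_prime_power[of m] v by (simp add: power_mult)
  obtain t where t: "int y - int a ^ k = int p ^ m * t"
    using y unfolding nat_cong_iff_int_dvd by auto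
  have "\<not> p dvd a ^ k"
    using assms(3) p(1) by (simp add: prime_dvd_iff_not_coprime)
  then have "\<not> int p dvd int a ^ k"
    unfolding of_nat_power[symmetric] of_nat_dvd_iff .
  then have "\<not> int p dvd int a ^ k * u"
    using assms(6) p(1) by (simp add: prime_dvd_mult_iff)
  then obtain i where i: "int p dvd t - int i * (int a ^ k * u)"
    using prime_linear_cong_solvable[OF p(1)] by blast
  have "int y - int a ^ (k + e * i) =
      int p ^ m * (t - int i * (int a ^ k * u))
      - int a ^ k * (int a ^ (e * i) - (1 + int i * u * int p ^ m))"
    using t by (simp add: power_add algebra_simps)
  moreover have "int p ^ (m + 1) dvd int p ^ m * (t - int i * (int a ^ k * u))"
    using i by (simp add: mult_dvd_mono)
  ultimately have "int p ^ (m + 1) dvd int y - int a ^ (k + e * i)"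
    using ci by (simp add: dvd_diff)
  then show ?thesis
    unfolding nat_cong_iff_int_dvd by (metis of_nat_power)
qed

lemma power_pred_eq_one_plus_prime_power:
  fixes p a :: nat
  assumes "prime p" and "coprime a p" and "2 \<le> a"
  obtains v u where "1 \<le> v" and "\<not> int p dvd u" and "int a ^ (p - 1) = 1 + u * int p ^ v"
proof -
  define x where "x = a ^ (p - 1) - 1"
  have "a \<le> a ^ (p - 1)"
    using assms(3) prime_ge_2_nat[OF assms(1)] by (simp add: self_le_power)
  then have x: "x \<noteq> 0" and ax: "a ^ (p - 1) = 1 + x" using assms(3) unfolding x_def by simp_all
  have "[a ^ (p - 1) = 1] (mod p)"
    using fermat_theorem[OF assms(1)] assms(1,2) by (simp add: prime_dvd_iff_not_coprime)
  then have "p dvd x"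
    using x unfolding x_def by (simp add: cong_altdef_nat)
  moreover have p: "\<not> is_unit p" using prime_gt_1_nat[OF assms(1)] by simp
  ultimately obtain y where y: "x = p ^ multiplicity p x * y" "\<not> p dvd y"
      and v: "1 \<le> multiplicity p x"
    using multiplicity_decompose'[OF x p] multiplicity_gt_zero_iff[OF x p] by auto
  have "int (a ^ (p - 1)) = int (1 + y * p ^ multiplicity p x)"
    using ax y(1) by (simp add: mult.commute)
  then have "int a ^ (p - 1) = 1 + int y * int p ^ multiplicity p x" by simp
  moreover have "\<not> int p dvd int y" using y(2) by simp
  ultimately show thesis using that[OF v] by blast
qed

section \<open>The closure of the powers of a unit in the p-adic topology\<close>

definition closure_powers :: "nat \<Rightarrow> nat \<Rightarrow> nat set" where
  "closure_powers p a = {y. 1 \<le> y \<and> (\<forall>m\<ge>1. \<exists>k. [y = a ^ k] (mod p ^ m))}"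

lemma mem_closure_powers_iff:
  "y \<in> closure_powers p a \<longleftrightarrow> 1 \<le> y \<and> (\<forall>m\<ge>N. \<exists>k. [y = a ^ k] (mod p ^ m))"
proof -
  have "\<exists>k. [y = a ^ k] (mod p ^ m)" if hyp: "\<forall>m\<ge>N. \<exists>k. [y = a ^ k] (mod p ^ m)" for m
  proof -
    obtain k where "[y = a ^ k] (mod p ^ max m N)" using hyp max.cobounded2 by meson
    moreover have "p ^ m dvd p ^ max m N" by (simp add: le_imp_power_dvd)
    ultimately show ?thesis using cong_dvd_modulus_nat by blast
  qed
  moreover have "\<exists>k. [y = a ^ k] (mod p ^ m)" if "\<forall>m\<ge>1. \<exists>k. [y = a ^ k] (mod p ^ m)" for m
    using that by (cases "m = 0") auto
  ultimately show ?thesis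
    unfolding closure_powers_def by blast
qed

lemma closure_powers_subset_iff:
  assumes "1 \<le> a"
  shows "closure_powers p a \<subseteq> closure_powers p b \<longleftrightarrow> a \<in> closure_powers p b"
proof
  assume "closure_powers p a \<subseteq> closure_powers p b"
  moreover have "a \<in> closure_powers p a"
    unfolding closure_powers_def using assms by (auto intro: exI[of _ 1])
  ultimately show "a \<in> closure_powers p b" by blast
next
  assume a: "a \<in> closure_powers p b"
  show "closure_powers p a \<subseteq> closure_powers p b"
  proof
    fix y assume y: "y \<in> closure_powers p a"
    have "\<exists>i. [y = b ^ i] (mod p ^ m)" if "1 \<le> m" for m
    proof -
      obtain k j where k: "[y = a ^ k] (mod p ^ m)" and j: "[a = b ^ j] (mod p ^ m)"
        using a y \<open>1 \<le> m\<close> unfolding closure_powers_def by blast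
      have "[y = (b ^ j) ^ k] (mod p ^ m)" using cong_trans[OF k cong_pow[OF j]] .
      then show ?thesis unfolding power_mult[symmetric] by blast
    qed
    then show "y \<in> closure_powers p b"
      using y unfolding closure_powers_def by blast
  qed
qed

lemma closure_powers_eq_level_set:
  fixes p a :: nat
  assumes "prime p" and "odd p" and "coprime a p" and "2 \<le> a"
  obtains v where "1 \<le> v"
    and "\<And>n. v \<le> n \<Longrightarrow> closure_powers p a = {y. 1 \<le> y \<and> (\<exists>k. [y = a ^ k] (mod p ^ n))}"
proof -
  obtain v u where v: "1 \<le> v" and u: "\<not> int p dvd u" and a: "int a ^ (p - 1) = 1 + u * int p ^ v"
    using power_pred_eq_one_plus_prime_power[OF assms(1,3,4)] .
  have "closure_powers p a = {y. 1 \<le> y \<and> (\<exists>k. [y = a ^ k] (mod p ^ n))}" if "v \<le> n" for n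
  proof (intro subset_antisym subsetI)
    fix y assume "y \<in> closure_powers p a"
    then show "y \<in> {y. 1 \<le> y \<and> (\<exists>k. [y = a ^ k] (mod p ^ n))}"
      using mem_closure_powers_iff[where N = n] by blast
  next
    fix y assume y: "y \<in> {y. 1 \<le> y \<and> (\<exists>k. [y = a ^ k] (mod p ^ n))}"
    have "\<exists>k. [y = a ^ k] (mod p ^ m)" if "n \<le> m" for m
      using that
    proof (induction m rule: dec_induct)
      case base
      then show ?case using y by blast
    next
      case (step m)
      then obtain k where k: "[y = a ^ k] (mod p ^ m)" by blast
      have vm: "v \<le> m" using \<open>v \<le> n\<close> step.hyps(1) by simp
      show ?case using power_cong_lift[OF assms(1,2,3) v(1) vm u a k] by simp
    qed
    then show "y \<in> closure_powers p a"
      using y mem_closure_powers_iff[where N = n] by blast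
  qed
  with v show thesis using that by blast
qed

lemma topspace_padic_top: "topspace (padic_top p) = coprimeN p"
proof -
  have "{x + p ^ m * k | k. True} \<subseteq> coprimeN p" if "x \<in> coprimeN p" "1 \<le> m" for x m
  proof -
    have "p dvd p ^ m * k" for k using that(2) by (simp add: dvd_power dvd_mult2)
    then show ?thesis using that(1) by (auto simp: coprimeN_def dvd_add_left_iff)
  qed
  moreover have "y \<in> {y + p ^ 1 * k | k. True}" for y by (auto intro: exI[of _ 0])
  ultimately show ?thesis
    unfolding padic_top_def topology_generated_by_topspace by blast
qed

lemma ball_subset_ball:
  fixes p :: nat
  assumes "m \<le> m'"
  shows "{y + p ^ m' * k | k. True} \<subseteq> {y + p ^ m * k | k. True}"
proof -
  have "y + p ^ m' * k = y + p ^ m * (p ^ (m' - m) * k)" for k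
    using assms by (simp add: power_add[symmetric])
  then show ?thesis by blast
qed

lemma openin_padic_top_imp_ball:
  assumes "openin (padic_top p) T" and "y \<in> T"
  shows "\<exists>m\<ge>1. {y + p ^ m * k | k. True} \<subseteq> T"
proof -
  have "generate_topology_on {{x + p ^ m * k | k. True} | x m. x \<in> coprimeN p \<and> m \<ge> 1} T"
    using assms(1) unfolding padic_top_def openin_topology_generated_by_iff .
  then show ?thesis
    using assms(2)
  proof (induction arbitrary: y rule: generate_topology_on.induct)
    case Empty
    then show ?case by simp
  next
    case (Int A B)
    then obtain m1 m2 where m1: "1 \<le> m1" and A: "{y + p ^ m1 * k | k. True} \<subseteq> A"
      and B: "{y + p ^ m2 * k | k. True} \<subseteq> B" by blast
    have "{y + p ^ max m1 m2 * k | k. True} \<subseteq> A \<inter> B"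
      using subset_trans[OF ball_subset_ball A] subset_trans[OF ball_subset_ball B] by simp
    then show ?case using m1 by (intro exI[of _ "max m1 m2"]) auto
  next
    case (UN K)
    then show ?case by blast
  next
    case (Basis s)
    then obtain x m k0 where s: "s = {x + p ^ m * k | k. True}" "1 \<le> m" and y: "y = x + p ^ m * k0"
      by blast
    have "y + p ^ m * k = x + p ^ m * (k0 + k)" for k
      unfolding y by (simp add: algebra_simps)
    then show ?case using s by blast
  qed
qed

lemma closure_of_padic_top:
  "padic_top p closure_of S = {y \<in> coprimeN p. \<forall>m\<ge>1. \<exists>k. y + p ^ m * k \<in> S}"
proof (intro subset_antisym subsetI)
  fix y assume y: "y \<in> padic_top p closure_of S"
  then have yc: "y \<in> coprimeN p"
    using closure_of_subset_topspace[of "padic_top p" S] topspace_padic_top by auto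
  have "\<exists>k. y + p ^ m * k \<in> S" if "1 \<le> m" for m
  proof -
    define B where "B = {y + p ^ m * k | k. True}"
    have "B \<in> {{x + p ^ m * k | k. True} | x m. x \<in> coprimeN p \<and> m \<ge> 1}"
      unfolding B_def mem_Collect_eq using yc that by (intro exI[of _ y] exI[of _ m]) simp
    then have "openin (padic_top p) B"
      unfolding padic_top_def openin_topology_generated_by_iff by (rule generate_topology_on.Basis)
    moreover have "y \<in> B" unfolding B_def by (auto intro: exI[of _ 0])
    ultimately have "\<exists>z. z \<in> S \<and> z \<in> B"
      using y unfolding in_closure_of by blast
    then show ?thesis unfolding B_def by auto
  qed
  with yc show "y \<in> {y \<in> coprimeN p. \<forall>m\<ge>1. \<exists>k. y + p ^ m * k \<in> S}" by simp
next
  fix y assume "y \<in> {y \<in> coprimeN p. \<forall>m\<ge>1. \<exists>k. y + p ^ m * k \<in> S}"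
  then have yc: "y \<in> coprimeN p" and y: "\<And>m. 1 \<le> m \<Longrightarrow> \<exists>k. y + p ^ m * k \<in> S"
    by simp_all
  have "\<exists>z. z \<in> S \<and> z \<in> T" if yT: "y \<in> T" and oT: "openin (padic_top p) T" for T
  proof -
    obtain m where "1 \<le> m" and m: "{y + p ^ m * k | k. True} \<subseteq> T"
      using openin_padic_top_imp_ball[OF oT yT] by blast
    then obtain k where "y + p ^ m * k \<in> S" using y by blast
    moreover have "y + p ^ m * k \<in> T" using m by blast
    ultimately show ?thesis by blast
  qed
  with yc show "y \<in> padic_top p closure_of S"
    unfolding in_closure_of topspace_padic_top by simp
qed

lemma closure_powers_subset_coprimeN:
  assumes "prime p" and "coprime a p"
  shows "closure_powers p a \<subseteq> coprimeN p"
proof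
  fix y assume y: "y \<in> closure_powers p a"
  then obtain k where "[y = a ^ k] (mod p ^ 1)" unfolding closure_powers_def by blast
  then have "p dvd y \<longleftrightarrow> p dvd a ^ k" using cong_dvd_iff by simp
  moreover have "\<not> p dvd a ^ k" using assms by (simp add: prime_dvd_iff_not_coprime)
  ultimately have "\<not> p dvd y" by simp
  then show "y \<in> coprimeN p" using y unfolding closure_powers_def coprimeN_def by simp
qed

lemma exists_large_power_cong:
  fixes a n :: nat
  assumes "coprime a n" and "0 < n" and "2 \<le> a"
  obtains j where "1 \<le> j" and "y \<le> a ^ j" and "[a ^ j = a ^ k] (mod n)"
proof -
  define j where "j = k + totient n * (y + 1)"
  have "[a ^ totient n = 1] (mod n)" using euler_theorem assms(1) by (simp add: coprime_commute)
  then have "[a ^ k * (a ^ totient n) ^ (y + 1) = a ^ k * 1 ^ (y + 1)] (mod n)"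
    by (intro cong_mult cong_pow) auto
  then have "[a ^ j = a ^ k] (mod n)" unfolding j_def by (simp add: power_add power_mult)
  moreover have "y + 1 \<le> j"
    unfolding j_def using mult_le_mono1[of 1 "totient n" "y + 1"] assms(2)
    by (simp add: Suc_le_eq totient_gt_0_iff)
  moreover have "j < a ^ j"
    using less_exp[of j] power_mono[of 2 a j] assms(3) by linarith
  ultimately show thesis using that[of j] by simp
qed

lemma closure_of_powN:
  assumes "prime p" and "coprime a p" and "2 \<le> a"
  shows "padic_top p closure_of powN a = closure_powers p a"
proof (intro subset_antisym subsetI)
  fix y assume "y \<in> padic_top p closure_of powN a"
  then have y: "y \<in> coprimeN p" "\<forall>m\<ge>1. \<exists>k j. y + p ^ m * k = a ^ j \<and> 1 \<le> j"
    unfolding closure_of_padic_top powN_def by auto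
  have "\<exists>j. [y = a ^ j] (mod p ^ m)" if m: "1 \<le> m" for m
  proof -
    obtain k j where "y + p ^ m * k = a ^ j" using y(2) m by blast
    then have "[y + p ^ m * k = a ^ j] (mod p ^ m)" by simp
    then show ?thesis by (auto simp: cong_def)
  qed
  then show "y \<in> closure_powers p a"
    using y(1) unfolding closure_powers_def coprimeN_def by simp
next
  fix y assume y: "y \<in> closure_powers p a"
  have "\<exists>k. y + p ^ m * k \<in> powN a" if m: "1 \<le> m" for m
  proof -
    obtain k where k: "[y = a ^ k] (mod p ^ m)" using y m unfolding closure_powers_def by blast
    obtain j where j: "1 \<le> j" "y \<le> a ^ j" "[a ^ j = a ^ k] (mod p ^ m)"
      using exists_large_power_cong[of a "p ^ m" y k] assms by (auto simp: prime_gt_0_nat)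
    then obtain q where "a ^ j = q * p ^ m + y"
      using cong_le_nat cong_trans[OF j(3) cong_sym[OF k]] by blast
    then have "y + p ^ m * q = a ^ j" by simp
    with j(1) show ?thesis unfolding powN_def by (intro exI[of _ q]) auto
  qed
  moreover have "y \<in> coprimeN p" using closure_powers_subset_coprimeN[OF assms(1,2)] y ..
  ultimately show "y \<in> padic_top p closure_of powN a"
    unfolding closure_of_padic_top by simp
qed

lemma XpE:
  assumes "prime p" and "X \<in> Xp p"
  obtains a where "coprime a p" and "2 \<le> a" and "X = closure_powers p a"
proof -
  obtain a where a: "a \<in> coprimeN p" "a \<noteq> 1" and X: "X = padic_top p closure_of powN a"
    using assms(2) unfolding Xp_def by blast
  have "coprime a p" "2 \<le> a"
    using a assms(1) unfolding coprimeN_def by (auto simp: prime_dvd_iff_not_coprime)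
  with X show thesis using that closure_of_powN[OF assms(1)] by simp
qed

section \<open>Residues and the index i(X)\<close>

definition pi_saturated :: "nat \<Rightarrow> nat \<Rightarrow> nat set \<Rightarrow> bool" where
  "pi_saturated p n X \<longleftrightarrow> X = {x. 1 \<le> x \<and> pi_res p n x \<in> pi_res p n ` X}"

lemma card_mod_preimage:
  fixes M K :: nat
  assumes "0 < M" and "S \<subseteq> {..<M}"
  shows "card {u. u < M * K \<and> u mod M \<in> S} = K * card S"
proof -
  have "bij_betw (\<lambda>u. (u mod M, u div M)) {u. u < M * K \<and> u mod M \<in> S} (S \<times> {..<K})"
  proof (rule bij_betwI[where g = "\<lambda>(s, i). s + M * i"])
    have "s + M * i < M * K" if "s < M" "i < K" for s i
    proof -
      have "s + M * i < M * (i + 1)" using that(1) by simp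
      also have "\<dots> \<le> M * K" using that(2) by (intro mult_le_mono2) simp
      finally show ?thesis .
    qed
    then show "(\<lambda>(s, i). s + M * i) \<in> S \<times> {..<K} \<rightarrow> {u. u < M * K \<and> u mod M \<in> S}"
      using assms(2) by auto
  qed (use assms in \<open>auto simp: less_mult_imp_div_less mult.commute\<close>)
  then have "card {u. u < M * K \<and> u mod M \<in> S} = card (S \<times> {..<K})"
    by (rule bij_betw_same_card)
  then show ?thesis
    using finite_subset[OF assms(2)] by (simp add: card_cartesian_product)
qed

lemma card_pi_res_saturated:
  assumes "0 < p" and "pi_saturated p n X" and "1 \<le> n" and "n \<le> N"
    and "\<And>x. x \<in> X \<Longrightarrow> \<not> p dvd x"
  shows "card (pi_res p N ` X) = p ^ (N - n) * card (pi_res p n ` X)"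
proof -
  let ?R = "pi_res p n ` X"
  have X: "x \<in> X \<longleftrightarrow> 1 \<le> x \<and> pi_res p n x \<in> ?R" for x
    using arg_cong[OF assms(2)[unfolded pi_saturated_def], of "\<lambda>S. x \<in> S"] by simp
  have pN: "p ^ N = p ^ n * p ^ (N - n)"
    using assms(4) by (simp add: power_add[symmetric])
  have mod_mod: "pi_res p n (pi_res p N x) = pi_res p n x" for x
    unfolding pi_res_def using assms(4) by (simp add: le_imp_power_dvd mod_mod_cancel)
  have "pi_res p N ` X = {u. u < p ^ n * p ^ (N - n) \<and> pi_res p n u \<in> ?R}"
  proof (intro subset_antisym subsetI)
    fix u assume "u \<in> pi_res p N ` X"
    then obtain x where x: "x \<in> X" and u: "u = pi_res p N x" by blast
    have "u < p ^ n * p ^ (N - n)" unfolding u pi_res_def pN[symmetric] using assms(1) by simp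
    moreover have "pi_res p n u \<in> ?R" unfolding u mod_mod using x by blast
    ultimately show "u \<in> {u. u < p ^ n * p ^ (N - n) \<and> pi_res p n u \<in> ?R}" by simp
  next
    fix u assume "u \<in> {u. u < p ^ n * p ^ (N - n) \<and> pi_res p n u \<in> ?R}"
    then have u: "u < p ^ N" "pi_res p n u \<in> ?R" unfolding pN by simp_all
    then obtain x where x: "x \<in> X" "pi_res p n u = pi_res p n x" by blast
    have "p dvd p ^ n" using assms(3) by (simp add: dvd_power)
    then have "\<not> p ^ n dvd x" using assms(5)[OF x(1)] dvd_trans by blast
    then have "pi_res p n u \<noteq> 0" using x(2) by (simp add: pi_res_def dvd_eq_mod_eq_0)
    then have "1 \<le> u" unfolding pi_res_def by (cases u) simp_all
    then have "u \<in> X" using u(2) X by blast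
    moreover have "u = pi_res p N u" unfolding pi_res_def using u(1) by simp
    ultimately show "u \<in> pi_res p N ` X" by blast
  qed
  moreover have "?R \<subseteq> {..<p ^ n}" unfolding pi_res_def using assms(1) by auto
  ultimately show ?thesis
    using card_mod_preimage[of "p ^ n" ?R "p ^ (N - n)"] assms(1) unfolding pi_res_def by simp
qed

lemma units_res_eq_totatives:
  assumes "1 < m"
  shows "units_res m = totatives m"
proof (intro subset_antisym subsetI)
  fix u assume "u \<in> units_res m"
  then have "u < m" and u: "coprime u m" unfolding units_res_def by simp_all
  moreover have "u \<noteq> 0" using u assms by (cases "u = 0") auto
  ultimately show "u \<in> totatives m" unfolding totatives_def by simp
next
  fix u assume "u \<in> totatives m"
  then have "u \<le> m" and u: "coprime u m" unfolding totatives_def by simp_all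
  moreover have "u \<noteq> m" using u assms by auto
  ultimately show "u \<in> units_res m" unfolding units_res_def by simp
qed

lemma pi_res_closure_powers:
  assumes "1 \<le> n" and "1 \<le> a"
  shows "pi_res p n ` closure_powers p a = range (\<lambda>k. a ^ k mod p ^ n)"
proof
  show "pi_res p n ` closure_powers p a \<subseteq> range (\<lambda>k. a ^ k mod p ^ n)"
    using assms(1) unfolding closure_powers_def pi_res_def cong_def by blast
  have "a ^ k \<in> closure_powers p a" for k
    unfolding closure_powers_def using assms(2) by (auto intro!: exI[of _ k])
  then show "range (\<lambda>k. a ^ k mod p ^ n) \<subseteq> pi_res p n ` closure_powers p a"
    unfolding pi_res_def by blast
qed

lemma card_range_power_mod:
  fixes M a :: nat
  assumes "coprime M a"
  shows "card (range (\<lambda>k. a ^ k mod M)) = ord M a"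
proof -
  have "range (\<lambda>k. a ^ k mod M) \<subseteq> (\<lambda>k. a ^ k mod M) ` {..<ord M a}"
  proof
    fix r assume "r \<in> range (\<lambda>k. a ^ k mod M)"
    then obtain k where "r = a ^ k mod M" by blast
    also have "\<dots> = a ^ (k mod ord M a) mod M"
      using order_divides_expdiff[OF assms] by (simp add: cong_def)
    finally show "r \<in> (\<lambda>k. a ^ k mod M) ` {..<ord M a}"
      using assms by simp
  qed
  then have "range (\<lambda>k. a ^ k mod M) = (\<lambda>k. a ^ k mod M) ` {..<ord M a}" by blast
  then show ?thesis using card_image[OF inj_power_mod[OF assms]] by simp
qed

lemma closure_powers_saturated:
  assumes "1 \<le> n" and "1 \<le> a"
    and "closure_powers p a = {y. 1 \<le> y \<and> (\<exists>k. [y = a ^ k] (mod p ^ n))}"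
  shows "pi_saturated p n (closure_powers p a)"
proof -
  have "pi_res p n x \<in> range (\<lambda>k. a ^ k mod p ^ n) \<longleftrightarrow> (\<exists>k. [x = a ^ k] (mod p ^ n))" for x
    by (auto simp: pi_res_def cong_def)
  then show ?thesis
    unfolding pi_saturated_def pi_res_closure_powers[OF assms(1,2)] using assms(3) by simp
qed

lemma nX_closure_powers:
  assumes "prime p" and "odd p" and "coprime a p" and "2 \<le> a"
  defines "X \<equiv> closure_powers p a"
  shows "1 \<le> nX p X" and "pi_saturated p (nX p X) X"
proof -
  obtain v where v: "1 \<le> v"
    and level: "\<And>n. v \<le> n \<Longrightarrow> X = {y. 1 \<le> y \<and> (\<exists>k. [y = a ^ k] (mod p ^ n))}"
    using closure_powers_eq_level_set[OF assms(1-4)] unfolding X_def by blast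
  have sat: "pi_saturated p n X" if "v \<le> n" for n
    unfolding X_def using v that assms(4) level[OF that] unfolding X_def
    by (intro closure_powers_saturated) simp_all
  have coprime: "\<not> p dvd x" if "x \<in> X" for x
    using closure_powers_subset_coprimeN[OF assms(1,3)] that unfolding X_def coprimeN_def by blast
  have "p \<noteq> 2" using assms(2) by auto
  then have p: "0 < p" "3 \<le> p" using prime_ge_2_nat[OF assms(1)] by simp_all
  have "finite (pi_res p v ` X)"
    by (rule finite_subset[of _ "{..<p ^ v}"]) (auto simp: pi_res_def p(1))
  moreover have "pi_res p v ` X \<noteq> {}"
    unfolding X_def using pi_res_closure_powers[OF v, of a] assms(4) by simp
  ultimately have "1 \<le> card (pi_res p v ` X)" by (simp add: Suc_le_eq card_gt_0_iff)
  then have "max p 3 \<le> card (pi_res p (v + 1) ` X)"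
    using card_pi_res_saturated[OF p(1) sat[of v] v, of "v + 1"] coprime p(2) by simp
  then have "1 \<le> v + 1 \<and> pi_saturated p (v + 1) X \<and> max p 3 \<le> card (pi_res p (v + 1) ` X)"
    using sat by simp
  then have "1 \<le> nX p X \<and> pi_saturated p (nX p X) X \<and> max p 3 \<le> card (pi_res p (nX p X) ` X)"
    unfolding nX_def pi_saturated_def by (rule LeastI)
  then show "1 \<le> nX p X" and "pi_saturated p (nX p X) X" by simp_all
qed

lemma iX_closure_powers:
  assumes "prime p" and "odd p" and "coprime a p" and "2 \<le> a"
    and "nX p (closure_powers p a) \<le> N"
  shows "iX p (closure_powers p a) = totient (p ^ N) div ord (p ^ N) a"
proof -
  define X where "X = closure_powers p a"
  define n where "n = nX p X"
  have n: "1 \<le> n" "pi_saturated p n X" "n \<le> N"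
    using nX_closure_powers[OF assms(1-4)] assms(5) unfolding X_def n_def by simp_all
  have p: "0 < p" using prime_gt_0_nat[OF assms(1)] .
  have "\<not> p dvd x" if "x \<in> X" for x
    using closure_powers_subset_coprimeN[OF assms(1,3)] that unfolding X_def coprimeN_def by blast
  then have "card (pi_res p N ` X) = p ^ (N - n) * card (pi_res p n ` X)"
    using card_pi_res_saturated[OF p n(2,1,3)] by blast
  moreover have "card (pi_res p N ` X) = ord (p ^ N) a"
    unfolding X_def using pi_res_closure_powers[of N a p] card_range_power_mod[of "p ^ N" a]
      n assms(3,4) by (simp add: coprime_commute)
  moreover have "totient (p ^ N) = p ^ (N - n) * totient (p ^ n)"
    using n totient_prime_power[OF assms(1)] by (simp add: power_add[symmetric])
  moreover have "iX p X = totient (p ^ n) div card (pi_res p n ` X)"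
    unfolding iX_def n_def[symmetric] totient_def
    using units_res_eq_totatives[OF one_less_power[OF prime_gt_1_nat[OF assms(1)]]] n(1) by simp
  ultimately show ?thesis unfolding X_def using p by simp
qed

lemma cofactor_dvd_iff:
  fixes n a b :: nat
  assumes "0 < n" and "a dvd n" and "b dvd n"
  shows "n div b dvd n div a \<longleftrightarrow> a dvd b"
proof -
  obtain ia where ia: "n = a * ia" using assms(2) ..
  obtain ib where ib: "n = b * ib" using assms(3) ..
  have "0 < a" "0 < ia" using assms(1) unfolding ia by simp_all
  have "0 < b" "0 < ib" using assms(1) unfolding ib by simp_all
  have "n div a = ia" using \<open>0 < a\<close> unfolding ia by simp
  moreover have "n div b = ib" using \<open>0 < b\<close> unfolding ib by simp
  ultimately have "n div b dvd n div a \<longleftrightarrow> ib dvd ia" by simp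
  also have "\<dots> \<longleftrightarrow> b * ib dvd b * ia" using \<open>0 < b\<close> by simp
  also have "\<dots> \<longleftrightarrow> a * ia dvd b * ia" using ia ib by simp
  also have "\<dots> \<longleftrightarrow> a dvd b" using \<open>0 < ia\<close> by simp
  finally show ?thesis .
qed

section \<open>Cyclicity of the unit group modulo an odd prime power\<close>

lemma ord_dvd_ord_if_power_cong:
  fixes a b :: nat
  assumes "[a = b ^ j] (mod M)"
  shows "ord M a dvd ord M b"
proof -
  have "[a ^ ord M b = (b ^ j) ^ ord M b] (mod M)" using assms by (rule cong_pow)
  also have "(b ^ j) ^ ord M b = (b ^ ord M b) ^ j" by (simp add: power_mult[symmetric] mult.commute)
  also have "[(b ^ ord M b) ^ j = 1 ^ j] (mod M)" by (intro cong_pow ord)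
  finally show ?thesis by (simp add: ord_divides')
qed

lemma residue_primroot_power_cong:
  fixes M g a :: nat
  assumes "1 < M" and g: "residue_primroot M g" and "coprime M a"
  obtains \<alpha> where "0 < \<alpha>" and "[a = g ^ \<alpha>] (mod M)"
proof -
  have "coprime (a mod M) M" using assms(1,3) by (simp add: coprime_commute)
  moreover from this have "a mod M \<noteq> 0" using assms(1) by (cases "a mod M = 0") auto
  ultimately have "a mod M \<in> totatives M"
    using assms(1) by (simp add: totatives_def less_imp_le)
  then obtain \<alpha> where "a mod M = g ^ \<alpha> mod M"
    using residue_primroot_is_generator[OF assms(1) g] unfolding bij_betw_def by auto
  moreover have "[g ^ \<alpha> = g ^ (\<alpha> + totient M)] (mod M)"
  proof -
    have "coprime M g" and "ord M g = totient M" using g by (simp_all add: residue_primroot_def)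
    moreover have "[\<alpha> = \<alpha> + totient M] (mod totient M)" by (simp add: cong_def)
    ultimately show ?thesis using order_divides_expdiff by simp
  qed
  ultimately have "[a = g ^ (\<alpha> + totient M)] (mod M)"
    unfolding cong_def by simp
  moreover have "0 < \<alpha> + totient M" using assms(1) by simp
  ultimately show thesis by (rule that[rotated])
qed

text \<open>With \<open>a \<equiv> g ^ \<alpha>\<close> and \<open>b \<equiv> g ^ \<beta>\<close> for a primitive root \<open>g\<close>,
  \<open>ord b = \<phi> / gcd \<beta> \<phi>\<close>, and \<open>ord a dvd ord b\<close> forces \<open>gcd \<beta> \<phi> dvd \<alpha>\<close>;
  by Bezout \<open>g ^ gcd \<beta> \<phi>\<close> is a power of \<open>b\<close>.\<close>
lemma power_cong_if_ord_dvd_ord: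
  fixes M g a b :: nat
  assumes "1 < M" and g: "residue_primroot M g" and "coprime M a" and "coprime M b"
    and "ord M a dvd ord M b"
  shows "\<exists>j. [a = b ^ j] (mod M)"
proof -
  define \<phi> where "\<phi> = totient M"
  have \<phi>: "0 < \<phi>" "ord M g = \<phi>" "coprime M g"
    using assms(1) g unfolding \<phi>_def residue_primroot_def by auto
  have g\<phi>: "[g ^ \<phi> = 1] (mod M)" using ord[of g M] \<phi>(2) by simp
  obtain \<alpha> where \<alpha>: "[a = g ^ \<alpha>] (mod M)"
    using residue_primroot_power_cong[OF assms(1) g assms(3)] by blast
  obtain \<beta> where "0 < \<beta>" and \<beta>: "[b = g ^ \<beta>] (mod M)"
    using residue_primroot_power_cong[OF assms(1) g assms(4)] by blast
  define d where "d = gcd \<beta> \<phi>"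
  have ord_b: "ord M b = \<phi> div d"
    unfolding d_def using ord_cong[OF \<beta>] ord_power[OF \<phi>(3)] \<phi>(2) by simp
  have "d dvd \<alpha>"
  proof -
    have "[a ^ ord M b = 1] (mod M)" using assms(5) ord_divides by blast
    moreover have "[a ^ ord M b = g ^ (\<alpha> * ord M b)] (mod M)"
      using cong_pow[OF \<alpha>] by (simp add: power_mult)
    ultimately have "[g ^ (\<alpha> * ord M b) = 1] (mod M)" by (metis cong_sym cong_trans)
    then have "\<phi> dvd \<alpha> * (\<phi> div d)" using \<phi>(2) ord_b ord_divides by metis
    moreover have "\<phi> = (\<phi> div d) * d" and "0 < \<phi> div d"
      using \<phi>(1) unfolding d_def by (simp_all add: div_greater_zero_iff)
    ultimately have "(\<phi> div d) * d dvd (\<phi> div d) * \<alpha>" by (simp add: mult.commute)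
    then show ?thesis using \<open>0 < \<phi> div d\<close> by simp
  qed
  then obtain q where q: "\<alpha> = d * q" ..
  obtain x y where xy: "\<beta> * x = \<phi> * y + d"
    unfolding d_def using bezout_nat[of \<beta> \<phi>] \<open>0 < \<beta>\<close> by auto
  have "[b ^ x = (g ^ \<beta>) ^ x] (mod M)" using \<beta> by (rule cong_pow)
  also have "(g ^ \<beta>) ^ x = (g ^ \<phi>) ^ y * g ^ d" by (simp add: power_mult[symmetric] xy power_add)
  also have "[(g ^ \<phi>) ^ y * g ^ d = 1 ^ y * g ^ d] (mod M)"
    by (intro cong_mult cong_pow g\<phi>) auto
  finally have "[b ^ x = g ^ d] (mod M)" by simp
  then have "[(b ^ x) ^ q = (g ^ d) ^ q] (mod M)" by (rule cong_pow)
  then have "[a = (b ^ x) ^ q] (mod M)"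
    using cong_trans[OF \<alpha>[unfolded q power_mult] cong_sym] by blast
  then show ?thesis unfolding power_mult[symmetric] by blast
qed

lemma power_cong_iff_ord_dvd_ord_prime_power:
  fixes p a b :: nat
  assumes "prime p" and "odd p" and "1 \<le> N" and "coprime a p" and "coprime b p"
  shows "(\<exists>j. [a = b ^ j] (mod p ^ N)) \<longleftrightarrow> ord (p ^ N) a dvd ord (p ^ N) b"
proof
  assume "\<exists>j. [a = b ^ j] (mod p ^ N)"
  then show "ord (p ^ N) a dvd ord (p ^ N) b" using ord_dvd_ord_if_power_cong by blast
next
  assume dvd: "ord (p ^ N) a dvd ord (p ^ N) b"
  obtain g where "\<forall>k>0. residue_primroot (p ^ k) g"
    using residue_primroot_odd_prime_power_exists[OF assms(1,2)] by blast
  then have g: "residue_primroot (p ^ N) g" using assms(3) by simp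
  have "1 < p ^ N" using one_less_power[OF prime_gt_1_nat[OF assms(1)], of N] assms(3) by simp
  then show "\<exists>j. [a = b ^ j] (mod p ^ N)"
    using power_cong_if_ord_dvd_ord[OF _ g _ _ dvd] assms(4,5) by (simp add: coprime_commute)
qed

lemma iX_dvd_iff_power_cong:
  assumes "prime p" and "odd p" and a: "coprime a p" "2 \<le> a" and b: "coprime b p" "2 \<le> b"
    and "nX p (closure_powers p a) \<le> N" and "nX p (closure_powers p b) \<le> N"
  shows "iX p (closure_powers p b) dvd iX p (closure_powers p a) \<longleftrightarrow> (\<exists>j. [a = b ^ j] (mod p ^ N))"
proof -
  have "1 \<le> N" using nX_closure_powers(1)[OF assms(1,2) a] assms(7) by simp
  have "0 < totient (p ^ N)" using prime_gt_0_nat[OF assms(1)] by simp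
  moreover have "ord (p ^ N) c dvd totient (p ^ N)" if "coprime c p" for c
    using that by (intro order_divides_totient) (simp add: coprime_commute)
  ultimately show ?thesis
    unfolding iX_closure_powers[OF assms(1,2) a assms(7)] iX_closure_powers[OF assms(1,2) b assms(8)]
      power_cong_iff_ord_dvd_ord_prime_power[OF assms(1,2) \<open>1 \<le> N\<close> a(1) b(1)]
    using a(1) b(1) by (simp add: cofactor_dvd_iff)
qed

theorem lemma4p3:
  fixes p :: nat and X Y :: "nat set"
  assumes "prime p" and "odd p" and "X \<in> Xp p" and "Y \<in> Xp p"
  shows "X \<subseteq> Y \<longleftrightarrow> iX p Y dvd iX p X"
proof -
  obtain a where a: "coprime a p" "2 \<le> a" and X: "X = closure_powers p a"
    using XpE[OF assms(1,3)] .
  obtain b where b: "coprime b p" "2 \<le> b" and Y: "Y = closure_powers p b"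
    using XpE[OF assms(1,4)] .
  define N0 where "N0 = max (nX p X) (nX p Y)"
  have "X \<subseteq> Y \<longleftrightarrow> (\<forall>N\<ge>N0. \<exists>j. [a = b ^ j] (mod p ^ N))"
    unfolding X Y using closure_powers_subset_iff[of a p b] mem_closure_powers_iff[where N = N0] a(2)
    by simp
  also have "\<dots> \<longleftrightarrow> iX p Y dvd iX p X"
    using iX_dvd_iff_power_cong[OF assms(1,2) a b] unfolding X Y N0_def by (meson max.bounded_iff order_refl)
  finally show ?thesis .
qed

end
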